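(* Let $\{\mathcal H,\gamma,\ell,\ell^{(2)}\}$ be null metric hypersurface data $(\Phi,\xi)$-embedded in a semi-Riemannian manifold $(\mathcal M,g)$ and let $Z\in\mathfrak X(\mathcal M)$. Then on $\Phi(\mathcal H)$, $$Z^\alpha=\xi^\alpha n^aZ_a+P^{ab}e_a^\alpha Z_b+\nu^\alpha\,\boldsymbol Z(\xi),$$ where $\boldsymbol Z=g(Z,\cdot)$ and $Z_a$ denotes the components of $\Phi^\star\boldsymbol Z$.
   Context: Metric hypersurface data: $\mathcal H$ smooth $\mathfrak n$-manifold with symmetric $(0,2)$-tensor $\gamma$, one-form $\ell$, function $\ell^{(2)}$ such that $\mathcal A((W,a),(V,b))=\gamma(W,V)+a\ell(V)+b\ell(W)+ab\ell^{(2)}$ is non-degenerate on each $T_p\mathcal H\times\mathbb R$. $P$ (symmetric $(2,0)$), $n$, $n^{(2)}$ defined by $\gamma_{ab}n^b+n^{(2)}\ell_a=0$, $\ell_an^a+n^{(2)}\ell^{(2)}=1$, $P^{ab}\ell_b+\ell^{(2)}n^a=0$, $P^{ac}\gamma_{cb}+\ell_bn^a=\delta^a_b$; null means $n^{(2)}=0$. $(\Phi,\xi)$-embedded: $\Phi:\mathcal H\to\mathcal M$ embedding, $\xi$ vector field along $\Phi(\mathcal H)$ transverse to it, $\Phi^\star g=\gamma$, $\Phi^\star(g(\xi,\cdot))=\ell$, $\Phi^\star(g(\xi,\xi))=\ell^{(2)}$. $e_a^\alpha$ are the components of $\Phi_\star e_a$ for a basis $e_a$ of $T\mathcal H$, and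 $\nu=n^{(2)}\xi+\Phi_\star n$ ($=\Phi_\star n$ here). *)

theory Defs
  imports "HOL-Analysis.Analysis"
begin

text \<open>Pointwise (tangent-space) rendering. At a point p of H we work in the tangent
space T_{Phi(p)}M, identified with real^'m, with metric g given by a symmetric
nondegenerate matrix G. The index type 'n labels a basis e_a of T_pH; the push-forwards
Phi_* e_a are the vectors e a :: real^'m. Tensors on H are given by their components
in this basis.\<close>

definition metric :: "real^'m^'m \<Rightarrow> real^'m \<Rightarrow> real^'m \<Rightarrow> real" where
  "metric G x y = x \<bullet> (G *v y)"

definition semi_riemannian_metric :: "real^'m^'m \<Rightarrow> bool" where
  "semi_riemannian_metric G \<longleftrightarrow> transpose G = G \<and>
     (\<forall>y. (\<forall>x. metric G x y = 0) \<longrightarrow> y = 0)"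

text \<open>Metric hypersurface data at a point: the form A on T_pH x R is nondegenerate.\<close>
definition hypersurface_data ::
  "('n::finite \<Rightarrow> 'n \<Rightarrow> real) \<Rightarrow> ('n \<Rightarrow> real) \<Rightarrow> real \<Rightarrow> bool" where
  "hypersurface_data gam l l2 \<longleftrightarrow> (\<forall>a b. gam a b = gam b a) \<and>
     (\<forall>(W::'n \<Rightarrow> real) (w::real).
        (\<forall>(V::'n \<Rightarrow> real) (v::real).
            (\<Sum>i\<in>UNIV. \<Sum>j\<in>UNIV. gam i j * W i * V j) + w * (\<Sum>i\<in>UNIV. l i * V i)
            + v * (\<Sum>i\<in>UNIV. l i * W i) + w * v * l2 = 0)
        \<longrightarrow> W = (\<lambda>_. 0) \<and> w = 0)"

definition data_inverse ::
  "('n::finite \<Rightarrow> 'n \<Rightarrow> real) \<Rightarrow> ('n \<Rightarrow> real) \<Rightarrow> real \<Rightarrow>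
   ('n \<Rightarrow> 'n \<Rightarrow> real) \<Rightarrow> ('n \<Rightarrow> real) \<Rightarrow> real \<Rightarrow> bool" where
  "data_inverse gam l l2 P n n2 \<longleftrightarrow>
     (\<forall>a b. P a b = P b a) \<and>
     (\<forall>a. (\<Sum>b\<in>UNIV. gam a b * n b) + n2 * l a = 0) \<and>
     (\<Sum>a\<in>UNIV. l a * n a) + n2 * l2 = 1 \<and>
     (\<forall>a. (\<Sum>b\<in>UNIV. P a b * l b) + l2 * n a = 0) \<and>
     (\<forall>a b. (\<Sum>c\<in>UNIV. P a c * gam c b) + l b * n a = (if a = b then 1 else 0))"

definition embedded_at ::
  "real^'m^'m \<Rightarrow> ('n::finite \<Rightarrow> real^'m) \<Rightarrow> real^'m \<Rightarrow>
   ('n \<Rightarrow> 'n \<Rightarrow> real) \<Rightarrow> ('n \<Rightarrow> real) \<Rightarrow> real \<Rightarrow> bool" where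
  "embedded_at G e xi gam l l2 \<longleftrightarrow>
     CARD('m) = CARD('n) + 1 \<and>
     (\<forall>c::'n \<Rightarrow> real. (\<Sum>a\<in>UNIV. c a *\<^sub>R e a) = 0 \<longrightarrow> c = (\<lambda>_. 0)) \<and>
     xi \<notin> span (range e) \<and>
     (\<forall>a b. gam a b = metric G (e a) (e b)) \<and>
     (\<forall>a. l a = metric G xi (e a)) \<and>
     l2 = metric G xi xi"

end

theory Submission
  imports Defs
begin

text \<open>The right-hand side is the vector obtained from the covector \<open>(Z\<^sub>a, Z(\<xi>))\<close> by
  raising its index with \<open>(P, n, n2)\<close>, the inverse of the form \<open>\<A>\<close>. Hence its products
  with the \<open>e\<^sub>a\<close> and with \<open>\<xi>\<close> are \<open>Z\<^sub>a\<close> and \<open>Z(\<xi>)\<close>, as for \<open>Z\<close> itself; since \<open>\<xi>\<close>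
  and the \<open>e\<^sub>a\<close> form a basis and \<open>g\<close> is nondegenerate, the two vectors coincide.\<close>

lemma metric_commute:
  assumes "transpose G = G"
  shows "metric G x y = metric G y x"
proof -
  have "metric G x y = (x v* transpose G) \<bullet> y"
    using assms by (simp add: metric_def dot_lmul_matrix)
  then show ?thesis
    by (simp add: metric_def inner_commute)
qed

lemma metric_add_left: "metric G (x + y) z = metric G x z + metric G y z"
  by (simp add: metric_def inner_add_left)

lemma metric_scaleR_left: "metric G (c *\<^sub>R x) z = c * metric G x z"
  by (simp add: metric_def)

lemma metric_sum_left: "metric G (\<Sum>a\<in>A. f a) z = (\<Sum>a\<in>A. metric G (f a) z)"
  by (simp add: metric_def inner_sum_left)

lemma metric_diff_right: "metric G x (y - z) = metric G x y - metric G x z"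
  by (simp add: metric_def matrix_vector_mult_diff_distrib inner_diff_right)

lemma semi_riemannian_metric_eqI:
  assumes G: "semi_riemannian_metric G" and S: "span S = UNIV"
    and eq: "\<And>x. x \<in> S \<Longrightarrow> metric G y x = metric G z x"
  shows "y = z"
proof -
  let ?K = "{x. metric G x (y - z) = 0}"
  have sym: "transpose G = G"
    using G by (simp add: semi_riemannian_metric_def)
  have "S \<subseteq> ?K"
  proof
    fix x assume "x \<in> S"
    moreover have "metric G x (y - z) = metric G y x - metric G z x"
      by (simp add: metric_diff_right metric_commute[OF sym, of x])
    ultimately show "x \<in> ?K"
      using eq by simp
  qed
  moreover have "subspace ?K"
    using subspace_hyperplane2[of "G *v (y - z)"] by (simp add: metric_def)
  ultimately have "span S \<subseteq> ?K"
    by (rule span_minimal)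
  with S have "\<forall>x. metric G x (y - z) = 0"
    by blast
  with G have "y - z = 0"
    unfolding semi_riemannian_metric_def by blast
  then show ?thesis by simp
qed

lemma inj_if_coefficients_unique:
  fixes e :: "'n::finite \<Rightarrow> 'a::real_vector"
  assumes ind: "\<forall>c. (\<Sum>a\<in>UNIV. c a *\<^sub>R e a) = 0 \<longrightarrow> c = (\<lambda>_. 0)"
  shows "inj e"
proof (rule injI, rule ccontr)
  fix a b assume eq: "e a = e b" and ne: "a \<noteq> b"
  let ?c = "\<lambda>x. (if x = a then 1 else 0) - (if x = b then 1 else (0::real))"
  have "(\<Sum>x\<in>UNIV. ?c x *\<^sub>R e x) = e a - e b"
    by (simp add: scaleR_left_diff_distrib sum_subtractf if_distrib[of "\<lambda>t. t *\<^sub>R _"]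
        cong: if_cong)
  also have "\<dots> = 0" using eq by simp
  finally have "?c = (\<lambda>_. 0)" by (rule ind[rule_format])
  then have "?c a = 0" by (rule fun_cong)
  with ne show False by simp
qed

lemma independent_range_if_coefficients_unique:
  fixes e :: "'n::finite \<Rightarrow> 'a::real_vector"
  assumes ind: "\<forall>c. (\<Sum>a\<in>UNIV. c a *\<^sub>R e a) = 0 \<longrightarrow> c = (\<lambda>_. 0)"
  shows "independent (range e)"
proof
  assume "dependent (range e)"
  then obtain u where u: "\<exists>v\<in>range e. u v \<noteq> 0" "(\<Sum>v\<in>range e. u v *\<^sub>R v) = 0"
    using dependent_finite[of "range e"] by auto
  have "(\<Sum>a\<in>UNIV. u (e a) *\<^sub>R e a) = 0"
    using u(2) by (simp add: sum.reindex[OF inj_if_coefficients_unique[OF ind]])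
  then have "(\<lambda>a. u (e a)) = (\<lambda>_. 0)" by (rule ind[rule_format])
  with u(1) show False by (auto dest: fun_cong)
qed

lemma span_insert_transversal_eq_UNIV:
  fixes e :: "'n::finite \<Rightarrow> 'a::euclidean_space"
  assumes dim: "DIM('a) = CARD('n) + 1"
    and ind: "\<forall>c. (\<Sum>a\<in>UNIV. c a *\<^sub>R e a) = 0 \<longrightarrow> c = (\<lambda>_. 0)"
    and xi: "xi \<notin> span (range e)"
  shows "span (insert xi (range e)) = UNIV"
proof -
  have indep: "independent (insert xi (range e))"
    by (rule independent_insertI[OF xi independent_range_if_coefficients_unique[OF ind]])
  have "xi \<notin> range e"
    using xi span_base[of xi "range e"] by blast
  then have "card (insert xi (range e)) = CARD('n) + 1"
    using card_image[OF inj_if_coefficients_unique[OF ind]] by simp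
  also have "\<dots> = dim (UNIV :: 'a set)"
    using dim by simp
  finally have "UNIV \<subseteq> span (insert xi (range e))"
    using card_eq_dim[of "insert xi (range e)" UNIV] indep by simp
  then show ?thesis by (simp add: top.extremum_uniqueI)
qed

lemma data_inverse_transposed:
  assumes inv: "data_inverse gam l l2 P n n2"
  shows data_inverse_P_l: "(\<Sum>a\<in>UNIV. P a b * l a) = - l2 * n b"
    and data_inverse_P_gam: "(\<Sum>a\<in>UNIV. P a b * gam a c) = (if b = c then 1 else 0) - l c * n b"
proof -
  have P: "P a b = P b a" for a using inv unfolding data_inverse_def by blast
  have "(\<Sum>a\<in>UNIV. P b a * l a) + l2 * n b = 0"
    using inv unfolding data_inverse_def by blast
  then show "(\<Sum>a\<in>UNIV. P a b * l a) = - l2 * n b"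
    by (simp add: P eq_neg_iff_add_eq_0)
  have "(\<Sum>a\<in>UNIV. P b a * gam a c) + l c * n b = (if b = c then 1 else 0)"
    using inv unfolding data_inverse_def by blast
  then show "(\<Sum>a\<in>UNIV. P a b * gam a c) = (if b = c then 1 else 0) - l c * n b"
    by (simp add: P eq_diff_eq)
qed

lemma data_inverse_contract_transverse:
  assumes inv: "data_inverse gam l l2 P n n2"
  shows "(\<Sum>a\<in>UNIV. n a * Zt a) * l2 + (\<Sum>a\<in>UNIV. \<Sum>b\<in>UNIV. P a b * Zt b * l a)
           + Zx * (n2 * l2 + (\<Sum>a\<in>UNIV. n a * l a)) = Zx"
proof -
  have "(\<Sum>a\<in>UNIV. \<Sum>b\<in>UNIV. P a b * Zt b * l a) = (\<Sum>b\<in>UNIV. Zt b * (\<Sum>a\<in>UNIV. P a b * l a))"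
    by (subst sum.swap) (simp add: sum_distrib_left mult_ac)
  also have "\<dots> = - l2 * (\<Sum>b\<in>UNIV. n b * Zt b)"
    by (simp only: data_inverse_P_l[OF inv]) (simp add: sum_distrib_left mult_ac)
  finally show ?thesis
    using inv unfolding data_inverse_def by (simp add: mult.commute)
qed

lemma data_inverse_contract_tangent:
  assumes inv: "data_inverse gam l l2 P n n2" and gam: "\<And>a b. gam a b = gam b a"
  shows "(\<Sum>a\<in>UNIV. n a * Zt a) * l c + (\<Sum>a\<in>UNIV. \<Sum>b\<in>UNIV. P a b * Zt b * gam a c)
           + Zx * (n2 * l c + (\<Sum>a\<in>UNIV. n a * gam a c)) = Zt c"
proof -
  have "(\<Sum>a\<in>UNIV. n a * gam a c) = - n2 * l c"
    using inv unfolding data_inverse_def by (simp add: gam[of _ c] mult.commute eq_neg_iff_add_eq_0)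
  moreover have "(\<Sum>a\<in>UNIV. \<Sum>b\<in>UNIV. P a b * Zt b * gam a c)
      = (\<Sum>b\<in>UNIV. Zt b * (\<Sum>a\<in>UNIV. P a b * gam a c))"
    by (subst sum.swap) (simp add: sum_distrib_left mult_ac)
  moreover have "\<dots> = Zt c - l c * (\<Sum>b\<in>UNIV. n b * Zt b)"
    by (simp only: data_inverse_P_gam[OF inv])
      (simp add: right_diff_distrib sum_subtractf sum_distrib_left mult_ac
        if_distrib[of "\<lambda>x. Zt _ * x"] cong: if_cong)
  ultimately show ?thesis
    by (simp add: mult.commute)
qed

definition raise_index ::
  "('n::finite \<Rightarrow> real^'m) \<Rightarrow> real^'m \<Rightarrow> ('n \<Rightarrow> 'n \<Rightarrow> real) \<Rightarrow> ('n \<Rightarrow> real) \<Rightarrow> real \<Rightarrow>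
   ('n \<Rightarrow> real) \<Rightarrow> real \<Rightarrow> real^'m" where
  "raise_index e xi P n n2 Zt Zx =
     (\<Sum>a\<in>UNIV. n a * Zt a) *\<^sub>R xi
     + (\<Sum>a\<in>UNIV. \<Sum>b\<in>UNIV. (P a b * Zt b) *\<^sub>R e a)
     + Zx *\<^sub>R (n2 *\<^sub>R xi + (\<Sum>a\<in>UNIV. n a *\<^sub>R e a))"

lemma metric_raise_index_left:
  "metric G (raise_index e xi P n n2 Zt Zx) w =
     (\<Sum>a\<in>UNIV. n a * Zt a) * metric G xi w
     + (\<Sum>a\<in>UNIV. \<Sum>b\<in>UNIV. P a b * Zt b * metric G (e a) w)
     + Zx * (n2 * metric G xi w + (\<Sum>a\<in>UNIV. n a * metric G (e a) w))"
  by (simp add: raise_index_def metric_add_left metric_scaleR_left metric_sum_left)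

theorem lemmaB1:
  fixes G :: "real^'m^'m" and e :: "'n::finite \<Rightarrow> real^'m" and xi :: "real^'m"
    and gam :: "'n \<Rightarrow> 'n \<Rightarrow> real" and l :: "'n \<Rightarrow> real" and l2 :: real
    and P :: "'n \<Rightarrow> 'n \<Rightarrow> real" and n :: "'n \<Rightarrow> real" and n2 :: real
    and Z :: "real^'m"
  assumes "semi_riemannian_metric G"
    and "hypersurface_data gam l l2"
    and "data_inverse gam l l2 P n n2"
    and "n2 = 0"
    and "embedded_at G e xi gam l l2"
  shows "Z = (\<Sum>a\<in>UNIV. n a * metric G Z (e a)) *\<^sub>R xi
           + (\<Sum>a\<in>UNIV. \<Sum>b\<in>UNIV. (P a b * metric G Z (e b)) *\<^sub>R e a)
           + metric G Z xi *\<^sub>R (n2 *\<^sub>R xi + (\<Sum>a\<in>UNIV. n a *\<^sub>R e a))"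
proof -
  have sym: "metric G x y = metric G y x" for x y
    using assms(1) metric_commute unfolding semi_riemannian_metric_def by blast
  note emb = assms(5)[unfolded embedded_at_def]
  have e_e: "metric G (e a) (e b) = gam a b" and xi_e: "metric G xi (e a) = l a"
    and e_xi: "metric G (e a) xi = l a" and xi_xi: "metric G xi xi = l2" for a b
    using emb sym by auto
  have gam: "gam a b = gam b a" for a b
    using e_e sym by metis
  let ?R = "raise_index e xi P n n2 (\<lambda>a. metric G Z (e a)) (metric G Z xi)"
  have tangent: "metric G Z (e c) = metric G ?R (e c)" for c
    using data_inverse_contract_tangent[OF assms(3) gam]
    by (simp add: metric_raise_index_left e_e xi_e)
  have transverse: "metric G Z xi = metric G ?R xi"
    using data_inverse_contract_transverse[OF assms(3)]
    by (simp add: metric_raise_index_left e_xi xi_xi)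
  have "span (insert xi (range e)) = UNIV"
    using emb by (intro span_insert_transversal_eq_UNIV) simp_all
  then have "Z = ?R"
    by (rule semi_riemannian_metric_eqI[OF assms(1)]) (use tangent transverse in blast)
  then show ?thesis
    unfolding raise_index_def .
qed

end
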